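(* For every NBA $\mathcal A$, the relation $S(\sqsupseteq^{\mathrm{fx\text{-}de}},\sqsubseteq^{\mathrm{fx\text{-}de}})$ is good for saturation, i.e. $\mathcal L(\mathrm{Sat}(\mathcal A,S(\sqsupseteq^{\mathrm{fx\text{-}de}},\sqsubseteq^{\mathrm{fx\text{-}de}})))=\mathcal L(\mathcal A)$.
   Context: An NBA $\mathcal A=(\Sigma,Q,I,F,\delta)$, $\delta\subseteq Q\times\Sigma\times Q$, forward and backward complete; initial traces start in $I$, fair traces are infinite and visit $F$ infinitely often; the language is the set of infinite words with an initial fair trace. Delayed fixed-word simulation: for $w=\sigma_0\sigma_1\cdots\in\Sigma^\omega$, in the game $G_w$ from $(p_0,q_0)$, at round $i$ from $(p_i,q_i)$ Spoiler picks a transition $p_i\xrightarrow{\sigma_i}p_{i+1}$ and Duplicator answers $q_i\xrightarrow{\sigma_i}q_{i+1}$ (Spoiler is forced to read $w$, and Duplicator's strategy may depend on $w$); Duplicator wins the play if for every $i$ with $p_i\in F$ there is $j\ge i$ with $q_j\in F$. Then $p\sqsubseteq^{\mathrm{fx\text{-}de}}q$ iff for every $w\in\Sigma^\omega$ Duplicator has a winning strategy in $G_w$ from $(p,q)$; $\sqsupseteq$ is the inverse. Let $\Delta=Q\times\Sigma\times Q$. For $R_b,R_f\subseteq Q\times Q$, $S(R_b,R_f)=\{((p,\sigma,r),(p',\sigma,r'))\in\Delta\times\Delta:p\,R_b\,p',\ r\,R_f\,r'\}$. For a reflexive $S\subseteq\Delta\times\Delta$, the saturated automaton $\mathrm{Sat}(\mathcal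 A,S)=(\Sigma,Q,I,F,\delta')$ with $\delta'=\{t'\in\Delta:\exists t\in\delta,\ (t',t)\in S\}$. $S$ is good for saturation if $\mathrm{Sat}(\mathcal A,S)$ has the same language as $\mathcal A$. *)

theory Defs
  imports Main
begin

record ('s, 'q) nba =
  alphabet  :: "'s set"
  states    :: "'q set"
  initial   :: "'q set"
  accepting :: "'q set"
  trans     :: "('q \<times> 's \<times> 'q) set"

definition wf_complete_nba :: "('s, 'q) nba \<Rightarrow> bool" where
  "wf_complete_nba A \<longleftrightarrow>
     finite (alphabet A) \<and> finite (states A) \<and>
     initial A \<subseteq> states A \<and> accepting A \<subseteq> states A \<and>
     trans A \<subseteq> states A \<times> alphabet A \<times> states A \<and>
     (\<forall>p \<in> states A. \<forall>a \<in> alphabet A. \<exists>r. (p, a, r) \<in> trans A) \<and>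
     (\<forall>r \<in> states A. \<forall>a \<in> alphabet A. \<exists>p. (p, a, r) \<in> trans A)"

definition omega_words :: "('s, 'q) nba \<Rightarrow> (nat \<Rightarrow> 's) set" where
  "omega_words A = {w. \<forall>i. w i \<in> alphabet A}"

definition is_trace :: "('s, 'q) nba \<Rightarrow> (nat \<Rightarrow> 's) \<Rightarrow> (nat \<Rightarrow> 'q) \<Rightarrow> bool" where
  "is_trace A w \<rho> \<longleftrightarrow> (\<forall>i. (\<rho> i, w i, \<rho> (Suc i)) \<in> trans A)"

definition language :: "('s, 'q) nba \<Rightarrow> (nat \<Rightarrow> 's) set" where
  "language A = {w \<in> omega_words A. \<exists>\<rho>. is_trace A w \<rho> \<and> \<rho> 0 \<in> initial A \<and>
                   (\<exists>\<^sub>\<infinity> i. \<rho> i \<in> accepting A)}"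

text \<open>Duplicator strategies in the fixed-word game G_w: a map from Spoiler's play
  (p_0 p_1 ...) to Duplicator's play (q_0 q_1 ...), where q_i depends only on p_0..p_i.\<close>
definition causal :: "((nat \<Rightarrow> 'q) \<Rightarrow> (nat \<Rightarrow> 'q)) \<Rightarrow> bool" where
  "causal d \<longleftrightarrow> (\<forall>\<rho> \<rho>' i. (\<forall>j\<le>i. \<rho> j = \<rho>' j) \<longrightarrow> d \<rho> i = d \<rho>' i)"

definition dup_wins_de :: "('s, 'q) nba \<Rightarrow> (nat \<Rightarrow> 's) \<Rightarrow> 'q \<Rightarrow> 'q \<Rightarrow> bool" where
  "dup_wins_de A w p q \<longleftrightarrow>
     (\<exists>d. causal d \<and>
       (\<forall>\<rho>. \<rho> 0 = p \<and> is_trace A w \<rho> \<longrightarrow>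
          d \<rho> 0 = q \<and> is_trace A w (d \<rho>) \<and>
          (\<forall>i. \<rho> i \<in> accepting A \<longrightarrow> (\<exists>j\<ge>i. d \<rho> j \<in> accepting A))))"

definition fx_de_sim :: "('s, 'q) nba \<Rightarrow> ('q \<times> 'q) set" where
  "fx_de_sim A = {(p, q). p \<in> states A \<and> q \<in> states A \<and>
                    (\<forall>w \<in> omega_words A. dup_wins_de A w p q)}"

definition S_rel :: "('q \<times> 'q) set \<Rightarrow> ('q \<times> 'q) set \<Rightarrow>
    (('q \<times> 's \<times> 'q) \<times> ('q \<times> 's \<times> 'q)) set" where
  "S_rel Rb Rf = {((p, a, r), (p', a', r')). a = a' \<and> (p, p') \<in> Rb \<and> (r, r') \<in> Rf}"

definition Sat :: "('s, 'q) nba \<Rightarrow> (('q \<times> 's \<times> 'q) \<times> ('q \<times> 's \<times> 'q)) set \<Rightarrow> ('s, 'q) nba" where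
  "Sat A S = A\<lparr>trans := {t' \<in> states A \<times> alphabet A \<times> states A. \<exists>t \<in> trans A. (t', t) \<in> S}\<rparr>"

definition good_for_saturation :: "('s, 'q) nba \<Rightarrow> (('q \<times> 's \<times> 'q) \<times> ('q \<times> 's \<times> 'q)) set \<Rightarrow> bool" where
  "good_for_saturation A S \<longleftrightarrow> language (Sat A S) = language A"

end

theory Submission
  imports Defs "HOL-Library.Omega_Words_Fun"
begin

text \<open>Let \<rho> be an initial fair run of the saturated automaton on w. We build a run \<pi> of A on w
  with \<rho> i \<sqsubseteq> \<pi> i for all i: the saturated transition (\<rho> i, w i, \<rho> (i+1)) is dominated by a
  transition (p', w i, r') of A with p' \<sqsubseteq> \<rho> i and \<rho> (i+1) \<sqsubseteq> r', so composing simulations and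
  playing one round of the game from p' yields \<pi> (i+1) with \<rho> (i+1) \<sqsubseteq> \<pi> (i+1).
  Since every round restarts with a fresh strategy, a pending obligation to visit F could be
  postponed forever. By Koenig's lemma, however, a winning strategy from an accepting state visits F
  within a bound that is uniform over all Spoiler plays; carrying this bound along as a countdown
  forces \<pi> to be accepting infinitely often.\<close>

lemma finite_witness_for_all_bounds:
  assumes "finite S" and "\<And>n::nat. \<exists>s\<in>S. Q s n" and "\<And>s m n. Q s n \<Longrightarrow> m \<le> n \<Longrightarrow> Q s m"
  shows "\<exists>s\<in>S. \<forall>n. Q s n"
proof (rule ccontr)
  assume "\<not> ?thesis"
  then obtain N where N: "\<And>s. s \<in> S \<Longrightarrow> \<not> Q s (N s)" by metis
  obtain s where s: "s \<in> S" "Q s (Max (N ` S))" using assms(2) by blast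
  then have "N s \<le> Max (N ` S)" using assms(1) by simp
  then show False using N s assms(3) by blast
qed

lemma uniform_bound_finitely_branching:
  fixes X :: "(nat \<Rightarrow> 'a) set" and P :: "nat \<Rightarrow> (nat \<Rightarrow> 'a) \<Rightarrow> bool"
  assumes fin: "finite S" and range: "\<And>\<rho> k. \<rho> \<in> X \<Longrightarrow> \<rho> k \<in> S"
    and closed: "\<And>\<sigma>. (\<And>k. \<exists>\<rho>\<in>X. \<forall>m\<le>k. \<rho> m = \<sigma> m) \<Longrightarrow> \<sigma> \<in> X"
    and prefix_determined: "\<And>j \<rho> \<rho>'. \<forall>m\<le>j. \<rho> m = \<rho>' m \<Longrightarrow> P j \<rho> \<Longrightarrow> P j \<rho>'"
    and eventually: "\<And>\<rho>. \<rho> \<in> X \<Longrightarrow> \<exists>j. P j \<rho>"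
  shows "\<exists>n. \<forall>\<rho>\<in>X. \<exists>j\<le>n. P j \<rho>"
proof (rule ccontr)
  assume unbounded: "\<not> ?thesis"
  define bad where "bad k u \<longleftrightarrow> (\<forall>n. \<exists>\<rho>\<in>X. (\<forall>m<k. \<rho> m = u m) \<and> (\<forall>j\<le>n. \<not> P j \<rho>))"
    for k u
  have extend: "\<exists>u'. bad (Suc k) u' \<and> (\<forall>m<k. u' m = u m)" if "bad k u" for k u
  proof -
    let ?Q = "\<lambda>s n. \<exists>\<rho>\<in>X. (\<forall>m<Suc k. \<rho> m = (u(k := s)) m) \<and> (\<forall>j\<le>n. \<not> P j \<rho>)"
    have witness: "\<exists>s\<in>S. ?Q s n" for n
    proof -
      obtain \<rho> where "\<rho> \<in> X" "\<forall>m<k. \<rho> m = u m" "\<forall>j\<le>n. \<not> P j \<rho>"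
        using \<open>bad k u\<close> unfolding bad_def by blast
      then have "?Q (\<rho> k) n" by (intro bexI[of _ \<rho>]) (auto simp: less_Suc_eq)
      then show ?thesis using range \<open>\<rho> \<in> X\<close> by blast
    qed
    have "\<exists>s\<in>S. \<forall>n. ?Q s n"
      by (rule finite_witness_for_all_bounds[OF fin witness]) (meson order_trans)
    then obtain s where "\<forall>n. ?Q s n" by blast
    then show ?thesis unfolding bad_def by (intro exI[of _ "u(k := s)"]) auto
  qed
  have "bad 0 u" for u using unbounded unfolding bad_def by auto
  then obtain f where f: "\<And>k. bad k (f k)" and f_agree: "\<And>k m. m < k \<Longrightarrow> f (Suc k) m = f k m"
    using dependent_nat_choice[of bad "\<lambda>k u u'. \<forall>m<k. u' m = u m"] extend by metis
  define \<sigma> where "\<sigma> m = f (Suc m) m" for m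
  have f_\<sigma>: "m < k \<Longrightarrow> f k m = \<sigma> m" for k m
    by (induction k) (auto simp: \<sigma>_def less_Suc_eq f_agree)
  have approx: "\<exists>\<rho>\<in>X. (\<forall>m\<le>k. \<rho> m = \<sigma> m) \<and> (\<forall>j\<le>n. \<not> P j \<rho>)" for k n
  proof -
    obtain \<rho> where "\<rho> \<in> X" "\<forall>m<Suc k. \<rho> m = f (Suc k) m" "\<forall>j\<le>n. \<not> P j \<rho>"
      using f[of "Suc k"] unfolding bad_def by blast
    moreover have "\<forall>m\<le>k. \<rho> m = \<sigma> m" using calculation(2) f_\<sigma> by auto
    ultimately show ?thesis by blast
  qed
  have "\<sigma> \<in> X" by (rule closed) (use approx in blast)
  then obtain j where "P j \<sigma>" using eventually by blast
  moreover obtain \<rho> where "\<forall>m\<le>j. \<rho> m = \<sigma> m" "\<not> P j \<rho>" using approx[of j j] by blast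
  ultimately show False using prefix_determined[of j \<sigma> \<rho>] by auto
qed

lemma trace_in_states:
  assumes "wf_complete_nba A" and "is_trace A w \<rho>"
  shows "\<rho> (Suc k) \<in> states A"
  using assms unfolding wf_complete_nba_def is_trace_def by blast

lemma trace_exists:
  assumes wf: "wf_complete_nba A" and "p \<in> states A" and "w \<in> omega_words A"
  shows "\<exists>\<rho>. \<rho> 0 = p \<and> is_trace A w \<rho>"
proof -
  have successor: "\<exists>y. y \<in> states A \<and> (x, w n, y) \<in> trans A" if "x \<in> states A" for x n
    using wf that \<open>w \<in> omega_words A\<close> unfolding wf_complete_nba_def omega_words_def by blast
  have "\<exists>\<rho>. \<forall>n. (\<rho> n \<in> states A \<and> (n = 0 \<longrightarrow> \<rho> n = p)) \<and> (\<rho> n, w n, \<rho> (Suc n)) \<in> trans A"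
    by (rule dependent_nat_choice) (use \<open>p \<in> states A\<close> successor in auto)
  then show ?thesis unfolding is_trace_def by blast
qed

lemma is_trace_build:
  "is_trace A w (p ## \<tau>) \<longleftrightarrow> (p, w 0, \<tau> 0) \<in> trans A \<and> is_trace A (suffix 1 w) \<tau>"
  unfolding is_trace_def
proof safe
  fix i assume "\<forall>i. ((p ## \<tau>) i, w i, (p ## \<tau>) (Suc i)) \<in> trans A"
  from this[rule_format, of 0] this[rule_format, of "Suc i"]
  show "(p, w 0, \<tau> 0) \<in> trans A" "(\<tau> i, suffix 1 w i, \<tau> (Suc i)) \<in> trans A" by simp_all
next
  fix i assume "(p, w 0, \<tau> 0) \<in> trans A" "\<forall>i. (\<tau> i, suffix 1 w i, \<tau> (Suc i)) \<in> trans A"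
  then show "((p ## \<tau>) i, w i, (p ## \<tau>) (Suc i)) \<in> trans A" by (cases i) simp_all
qed

lemma suffix_omega_words: "w \<in> omega_words A \<Longrightarrow> suffix k w \<in> omega_words A"
  by (simp add: omega_words_def)

definition delayed_strategy ::
    "('s, 'q) nba \<Rightarrow> (nat \<Rightarrow> 's) \<Rightarrow> 'q \<Rightarrow> 'q \<Rightarrow> ((nat \<Rightarrow> 'q) \<Rightarrow> nat \<Rightarrow> 'q) \<Rightarrow> bool" where
  "delayed_strategy A w p q d \<longleftrightarrow> causal d \<and>
     (\<forall>\<rho>. \<rho> 0 = p \<and> is_trace A w \<rho> \<longrightarrow>
        d \<rho> 0 = q \<and> is_trace A w (d \<rho>) \<and>
        (\<forall>i. \<rho> i \<in> accepting A \<longrightarrow> (\<exists>j\<ge>i. d \<rho> j \<in> accepting A)))"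

definition meets_deadline ::
    "('s, 'q) nba \<Rightarrow> (nat \<Rightarrow> 's) \<Rightarrow> 'q \<Rightarrow> ((nat \<Rightarrow> 'q) \<Rightarrow> nat \<Rightarrow> 'q) \<Rightarrow> nat \<Rightarrow> bool" where
  "meets_deadline A w p d n \<longleftrightarrow>
     (\<forall>\<rho>. \<rho> 0 = p \<and> is_trace A w \<rho> \<longrightarrow> (\<exists>j\<le>n. d \<rho> j \<in> accepting A))"

text \<open>The option is a pending obligation: \<open>Some n\<close> additionally demands that Duplicator's play
  visit F by position n, \<open>None\<close> demands nothing beyond the delayed condition.\<close>
definition dup_wins_de_within ::
    "('s, 'q) nba \<Rightarrow> (nat \<Rightarrow> 's) \<Rightarrow> 'q \<Rightarrow> 'q \<Rightarrow> nat option \<Rightarrow> bool" where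
  "dup_wins_de_within A w p q ob \<longleftrightarrow>
     (\<exists>d. delayed_strategy A w p q d \<and> (\<forall>n. ob = Some n \<longrightarrow> meets_deadline A w p d n))"

lemma dup_wins_de_within_refl: "dup_wins_de_within A w p p None"
  unfolding dup_wins_de_within_def delayed_strategy_def causal_def
  by (rule exI[of _ id]) auto

lemma fx_de_sim_refl: "p \<in> states A \<Longrightarrow> (p, p) \<in> fx_de_sim A"
  unfolding fx_de_sim_def dup_wins_de_def causal_def
  by (auto intro!: exI[of _ id])

lemma fx_de_sim_dup_wins_de_within:
  "(p, q) \<in> fx_de_sim A \<Longrightarrow> w \<in> omega_words A \<Longrightarrow> dup_wins_de_within A w p q None"
  unfolding fx_de_sim_def dup_wins_de_def dup_wins_de_within_def delayed_strategy_def by simp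

lemma causal_comp: "causal d\<^sub>1 \<Longrightarrow> causal d\<^sub>2 \<Longrightarrow> causal (d\<^sub>2 \<circ> d\<^sub>1)"
  unfolding causal_def by (simp add: le_trans)

lemma delayed_strategy_comp:
  assumes "delayed_strategy A w x y d\<^sub>1" and "delayed_strategy A w y z d\<^sub>2"
  shows "delayed_strategy A w x z (d\<^sub>2 \<circ> d\<^sub>1)"
  unfolding delayed_strategy_def
proof (intro conjI allI impI)
  show "causal (d\<^sub>2 \<circ> d\<^sub>1)" using assms causal_comp unfolding delayed_strategy_def by blast
  fix \<rho> assume \<rho>: "\<rho> 0 = x \<and> is_trace A w \<rho>"
  then have d1: "d\<^sub>1 \<rho> 0 = y \<and> is_trace A w (d\<^sub>1 \<rho>) \<and> (\<forall>i. \<rho> i \<in> accepting A \<longrightarrow> (\<exists>j\<ge>i. d\<^sub>1 \<rho> j \<in> accepting A))"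
    using assms(1) unfolding delayed_strategy_def by blast
  then have d2: "d\<^sub>2 (d\<^sub>1 \<rho>) 0 = z \<and> is_trace A w (d\<^sub>2 (d\<^sub>1 \<rho>)) \<and>
      (\<forall>i. d\<^sub>1 \<rho> i \<in> accepting A \<longrightarrow> (\<exists>j\<ge>i. d\<^sub>2 (d\<^sub>1 \<rho>) j \<in> accepting A))"
    using assms(2) unfolding delayed_strategy_def by blast
  then show "(d\<^sub>2 \<circ> d\<^sub>1) \<rho> 0 = z" "is_trace A w ((d\<^sub>2 \<circ> d\<^sub>1) \<rho>)" by simp_all
  fix i assume "\<rho> i \<in> accepting A"
  then obtain j where "j \<ge> i" "d\<^sub>1 \<rho> j \<in> accepting A" using d1 by blast
  then obtain k where "k \<ge> j" "d\<^sub>2 (d\<^sub>1 \<rho>) k \<in> accepting A" using d2 by blast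
  then show "\<exists>j\<ge>i. (d\<^sub>2 \<circ> d\<^sub>1) \<rho> j \<in> accepting A"
    using \<open>j \<ge> i\<close> by (auto intro: order_trans)
qed

lemma meets_deadline_comp:
  assumes "delayed_strategy A w x y d\<^sub>1" and "meets_deadline A w y d\<^sub>2 n"
  shows "meets_deadline A w x (d\<^sub>2 \<circ> d\<^sub>1) n"
  using assms unfolding delayed_strategy_def meets_deadline_def by simp

lemma dup_wins_de_within_trans:
  assumes "dup_wins_de_within A w x y None" and "dup_wins_de_within A w y z ob"
  shows "dup_wins_de_within A w x z ob"
proof -
  obtain d\<^sub>1 d\<^sub>2 where "delayed_strategy A w x y d\<^sub>1" "delayed_strategy A w y z d\<^sub>2"
    and "\<forall>n. ob = Some n \<longrightarrow> meets_deadline A w y d\<^sub>2 n"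
    using assms unfolding dup_wins_de_within_def by blast
  then show ?thesis unfolding dup_wins_de_within_def
    by (intro exI[of _ "d\<^sub>2 \<circ> d\<^sub>1"]) (simp add: delayed_strategy_comp meets_deadline_comp)
qed

lemma is_trace_suffix: "is_trace A w \<rho> \<Longrightarrow> is_trace A (suffix k w) (suffix k \<rho>)"
  unfolding is_trace_def by simp

lemma causal_shift:
  assumes "causal d"
  shows "causal (\<lambda>\<tau>. suffix 1 (d (p ## \<tau>)))"
  unfolding causal_def
proof (intro allI impI)
  fix \<tau> \<tau>' :: "nat \<Rightarrow> 'a" and i
  assume "\<forall>j\<le>i. \<tau> j = \<tau>' j"
  then have "(p ## \<tau>) j = (p ## \<tau>') j" if "j \<le> Suc i" for j
    using that by (cases j) auto
  then show "suffix 1 (d (p ## \<tau>)) i = suffix 1 (d (p ## \<tau>')) i"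
    using \<open>causal d\<close> unfolding causal_def by simp
qed

lemma delayed_strategy_shift:
  assumes d: "delayed_strategy A w p q d" and "(p, w 0, p') \<in> trans A"
    and \<tau>\<^sub>0: "\<tau>\<^sub>0 0 = p'" "is_trace A (suffix 1 w) \<tau>\<^sub>0"
  shows "(q, w 0, d (p ## \<tau>\<^sub>0) 1) \<in> trans A"
    and "delayed_strategy A (suffix 1 w) p' (d (p ## \<tau>\<^sub>0) 1) (\<lambda>\<tau>. suffix 1 (d (p ## \<tau>)))"
proof -
  have play: "d (p ## \<tau>) 0 = q \<and> is_trace A w (d (p ## \<tau>)) \<and>
      (\<forall>i. (p ## \<tau>) i \<in> accepting A \<longrightarrow> (\<exists>j\<ge>i. d (p ## \<tau>) j \<in> accepting A))"
    if "\<tau> 0 = p'" "is_trace A (suffix 1 w) \<tau>" for \<tau>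
  proof -
    have "(p ## \<tau>) 0 = p" "is_trace A w (p ## \<tau>)"
      using that \<open>(p, w 0, p') \<in> trans A\<close> by (simp_all add: is_trace_build)
    then show ?thesis using d unfolding delayed_strategy_def by blast
  qed
  show "(q, w 0, d (p ## \<tau>\<^sub>0) 1) \<in> trans A"
    using play[OF \<tau>\<^sub>0] unfolding is_trace_def by (metis One_nat_def)
  have "causal d" using d unfolding delayed_strategy_def by blast
  show "delayed_strategy A (suffix 1 w) p' (d (p ## \<tau>\<^sub>0) 1) (\<lambda>\<tau>. suffix 1 (d (p ## \<tau>)))"
    unfolding delayed_strategy_def
  proof (intro conjI allI impI)
    show "causal (\<lambda>\<tau>. suffix 1 (d (p ## \<tau>)))" using causal_shift[OF \<open>causal d\<close>] .
    fix \<tau> assume \<tau>: "\<tau> 0 = p' \<and> is_trace A (suffix 1 w) \<tau>"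
    have "\<forall>j\<le>1. (p ## \<tau>) j = (p ## \<tau>\<^sub>0) j" using \<tau> \<tau>\<^sub>0 by (auto simp: le_Suc_eq)
    then show "suffix 1 (d (p ## \<tau>)) 0 = d (p ## \<tau>\<^sub>0) 1"
      using \<open>causal d\<close> unfolding causal_def by simp
    show "is_trace A (suffix 1 w) (suffix 1 (d (p ## \<tau>)))"
      using play \<tau> is_trace_suffix by blast
    fix i assume "\<tau> i \<in> accepting A"
    then obtain j where "j \<ge> Suc i" "d (p ## \<tau>) j \<in> accepting A" using play \<tau> by force
    then show "\<exists>j\<ge>i. suffix 1 (d (p ## \<tau>)) j \<in> accepting A"
      by (intro exI[of _ "j - 1"]) auto
  qed
qed

lemma meets_deadline_shift:
  assumes d: "delayed_strategy A w p q d" and "q \<notin> accepting A" and "meets_deadline A w p d n"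
    and "(p, w 0, p') \<in> trans A" and \<tau>\<^sub>0: "\<tau>\<^sub>0 0 = p'" "is_trace A (suffix 1 w) \<tau>\<^sub>0"
  shows "\<exists>m. n = Suc m \<and> meets_deadline A (suffix 1 w) p' (\<lambda>\<tau>. suffix 1 (d (p ## \<tau>))) m"
proof -
  have late: "\<exists>j. Suc j \<le> n \<and> d (p ## \<tau>) (Suc j) \<in> accepting A"
    if "\<tau> 0 = p'" "is_trace A (suffix 1 w) \<tau>" for \<tau>
  proof -
    have "(p ## \<tau>) 0 = p \<and> is_trace A w (p ## \<tau>)"
      using that \<open>(p, w 0, p') \<in> trans A\<close> by (simp add: is_trace_build)
    then obtain j where "j \<le> n" "d (p ## \<tau>) j \<in> accepting A" "d (p ## \<tau>) 0 = q"
      using d \<open>meets_deadline A w p d n\<close> unfolding delayed_strategy_def meets_deadline_def by blast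
    then show ?thesis using \<open>q \<notin> accepting A\<close> by (cases j) auto
  qed
  obtain m where "n = Suc m" using late[OF \<tau>\<^sub>0] by (cases n) auto
  moreover have "meets_deadline A (suffix 1 w) p' (\<lambda>\<tau>. suffix 1 (d (p ## \<tau>))) m"
    unfolding meets_deadline_def using late \<open>n = Suc m\<close> by fastforce
  ultimately show ?thesis by blast
qed

lemma dup_wins_de_within_step:
  assumes wf: "wf_complete_nba A" and "w \<in> omega_words A"
    and "dup_wins_de_within A w p q ob" and "(p, w 0, p') \<in> trans A"
  shows "\<exists>q'. (q, w 0, q') \<in> trans A \<and> (q \<notin> accepting A \<longrightarrow> ob \<noteq> Some 0) \<and>
    dup_wins_de_within A (suffix 1 w) p' q' (if q \<in> accepting A then None else map_option (\<lambda>n. n - 1) ob)"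
proof -
  obtain d where d: "delayed_strategy A w p q d"
    and deadline: "\<And>n. ob = Some n \<Longrightarrow> meets_deadline A w p d n"
    using assms(3) unfolding dup_wins_de_within_def by blast
  have "p' \<in> states A" using wf \<open>(p, w 0, p') \<in> trans A\<close> unfolding wf_complete_nba_def by blast
  then obtain \<tau>\<^sub>0 where \<tau>\<^sub>0: "\<tau>\<^sub>0 0 = p'" "is_trace A (suffix 1 w) \<tau>\<^sub>0"
    using trace_exists[OF wf _ suffix_omega_words[OF \<open>w \<in> omega_words A\<close>]] by blast
  let ?d' = "\<lambda>\<tau>. suffix 1 (d (p ## \<tau>))"
  note shift = delayed_strategy_shift[OF d \<open>(p, w 0, p') \<in> trans A\<close> \<tau>\<^sub>0]
  have "\<exists>m. n = Suc m \<and> meets_deadline A (suffix 1 w) p' ?d' m"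
    if "q \<notin> accepting A" "ob = Some n" for n
    using meets_deadline_shift[OF d that(1) deadline[OF that(2)] \<open>(p, w 0, p') \<in> trans A\<close> \<tau>\<^sub>0] .
  then show ?thesis using shift unfolding dup_wins_de_within_def
    by (intro exI[of _ "d (p ## \<tau>\<^sub>0) 1"] conjI impI exI[of _ ?d']) auto
qed

lemma delayed_strategy_meets_deadline:
  assumes wf: "wf_complete_nba A" and d: "delayed_strategy A w p q d" and "p \<in> accepting A"
  shows "\<exists>n. meets_deadline A w p d n"
proof -
  let ?X = "{\<rho>. \<rho> 0 = p \<and> is_trace A w \<rho>}"
  have "\<exists>n. \<forall>\<rho>\<in>?X. \<exists>j\<le>n. d \<rho> j \<in> accepting A"
  proof (rule uniform_bound_finitely_branching[where S = "insert p (states A)"])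
    show "finite (insert p (states A))" using wf unfolding wf_complete_nba_def by blast
    show "\<rho> k \<in> insert p (states A)" if "\<rho> \<in> ?X" for \<rho> k
      using that trace_in_states[OF wf] by (cases k) auto
    show "\<sigma> \<in> ?X" if approx: "\<And>k. \<exists>\<rho>\<in>?X. \<forall>m\<le>k. \<rho> m = \<sigma> m" for \<sigma>
    proof -
      have "(\<sigma> i, w i, \<sigma> (Suc i)) \<in> trans A" for i
      proof -
        obtain \<rho> where "is_trace A w \<rho>" "\<forall>m\<le>Suc i. \<rho> m = \<sigma> m" using approx[of "Suc i"] by blast
        then show ?thesis unfolding is_trace_def by (metis le_SucI order_refl)
      qed
      moreover have "\<sigma> 0 = p" using approx[of 0] by auto
      ultimately show ?thesis unfolding is_trace_def by blast
    qed
    show "d \<rho>' j \<in> accepting A" if "\<forall>m\<le>j. \<rho> m = \<rho>' m" "d \<rho> j \<in> accepting A" for j \<rho> \<rho>'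
    proof -
      have "causal d" using d unfolding delayed_strategy_def by blast
      then have "d \<rho> j = d \<rho>' j" using that(1) unfolding causal_def by blast
      then show ?thesis using that(2) by simp
    qed
    show "\<exists>j. d \<rho> j \<in> accepting A" if "\<rho> \<in> ?X" for \<rho>
      using d that \<open>p \<in> accepting A\<close> unfolding delayed_strategy_def by force
  qed
  then show ?thesis unfolding meets_deadline_def by auto
qed

lemma dup_wins_de_within_accepting:
  assumes "wf_complete_nba A" and "dup_wins_de_within A w p q None" and "p \<in> accepting A"
  shows "\<exists>n. dup_wins_de_within A w p q (Some n)"
  using assms delayed_strategy_meets_deadline unfolding dup_wins_de_within_def by fastforce

lemma INFM_by_countdown:
  fixes c :: "nat \<Rightarrow> nat option"
  assumes "\<exists>\<^sub>\<infinity> i. c i \<noteq> None"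
    and countdown: "\<And>i n. \<not> P i \<Longrightarrow> c i = Some n \<Longrightarrow> n \<noteq> 0 \<and> c (Suc i) = Some (n - 1)"
  shows "\<exists>\<^sub>\<infinity> i. P i"
proof (rule ccontr)
  assume "\<not> (\<exists>\<^sub>\<infinity> i. P i)"
  then obtain m where m: "\<And>i. i > m \<Longrightarrow> \<not> P i" unfolding INFM_nat by blast
  obtain i N where "i > m" "c i = Some N" using assms(1) unfolding INFM_nat by blast
  have "c (i + k) = Some (N - k) \<and> k \<le> N" for k
  proof (induction k)
    case 0 show ?case using \<open>c i = Some N\<close> by simp
  next
    case (Suc k)
    have "\<not> P (i + k)" using m \<open>i > m\<close> by simp
    then have "N - k \<noteq> 0 \<and> c (Suc (i + k)) = Some (N - k - 1)"
      using countdown Suc.IH by blast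
    then show ?case using Suc.IH by simp
  qed
  from this[of "Suc N"] show False by simp
qed

lemma fx_de_saturated_step:
  assumes wf: "wf_complete_nba A" and w: "w \<in> omega_words A"
    and sat: "((p, w 0, r), t) \<in> S_rel ((fx_de_sim A)\<inverse>) (fx_de_sim A)" and "t \<in> trans A"
    and "dup_wins_de_within A w p q ob"
  shows "\<exists>q' ob'. (q, w 0, q') \<in> trans A \<and> dup_wins_de_within A (suffix 1 w) r q' ob' \<and>
    (r \<in> accepting A \<longrightarrow> ob' \<noteq> None) \<and>
    (q \<notin> accepting A \<longrightarrow> (\<forall>n. ob = Some n \<longrightarrow> n \<noteq> 0 \<and> ob' = Some (n - 1)))"
proof -
  obtain p' r' where t: "t = (p', w 0, r')" and "(p', p) \<in> fx_de_sim A" "(r, r') \<in> fx_de_sim A"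
    using sat unfolding S_rel_def by auto
  let ?ob\<^sub>1 = "if q \<in> accepting A then None else map_option (\<lambda>n. n - 1) ob"
  have "dup_wins_de_within A w p' q ob"
    using fx_de_sim_dup_wins_de_within[OF \<open>(p', p) \<in> fx_de_sim A\<close> w]
      \<open>dup_wins_de_within A w p q ob\<close> by (rule dup_wins_de_within_trans)
  then obtain q' where q': "(q, w 0, q') \<in> trans A" "q \<notin> accepting A \<longrightarrow> ob \<noteq> Some 0"
    and "dup_wins_de_within A (suffix 1 w) r' q' ?ob\<^sub>1"
    using dup_wins_de_within_step[OF wf w] \<open>t \<in> trans A\<close> t by blast
  have win: "dup_wins_de_within A (suffix 1 w) r q' ?ob\<^sub>1"
    using fx_de_sim_dup_wins_de_within[OF \<open>(r, r') \<in> fx_de_sim A\<close> suffix_omega_words[OF w]]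
      \<open>dup_wins_de_within A (suffix 1 w) r' q' ?ob\<^sub>1\<close> by (rule dup_wins_de_within_trans)
  show ?thesis
  proof (cases "r \<in> accepting A \<and> ?ob\<^sub>1 = None")
    case True
    then obtain n where "dup_wins_de_within A (suffix 1 w) r q' (Some n)"
      using dup_wins_de_within_accepting[OF wf] win by metis
    then show ?thesis using q' True by (auto split: if_splits)
  next
    case False
    then show ?thesis using q' win by (intro exI[of _ q'] exI[of _ ?ob\<^sub>1]) auto
  qed
qed

lemma language_Sat_fx_de_subset:
  assumes wf: "wf_complete_nba A"
  shows "language (Sat A (S_rel ((fx_de_sim A)\<inverse>) (fx_de_sim A))) \<subseteq> language A"
proof
  let ?S = "S_rel ((fx_de_sim A)\<inverse>) (fx_de_sim A)"
  fix w assume "w \<in> language (Sat A ?S)"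
  then obtain \<rho> where w: "w \<in> omega_words A" and \<rho>: "is_trace (Sat A ?S) w \<rho>"
    and "\<rho> 0 \<in> initial A" and fair: "\<exists>\<^sub>\<infinity> i. \<rho> i \<in> accepting A"
    unfolding language_def omega_words_def Sat_def by auto
  have sat: "\<exists>t\<in>trans A. ((\<rho> i, suffix i w 0, \<rho> (Suc i)), t) \<in> ?S" for i
    using \<rho> unfolding is_trace_def Sat_def by auto
  define Inv where "Inv i x \<longleftrightarrow> dup_wins_de_within A (suffix i w) (\<rho> i) (fst x) (snd x) \<and>
    (\<rho> i \<in> accepting A \<longrightarrow> snd x \<noteq> None) \<and> (i = 0 \<longrightarrow> fst x = \<rho> 0)" for i x
  define Step where "Step i x y \<longleftrightarrow> (fst x, w i, fst y) \<in> trans A \<and>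
    (fst x \<notin> accepting A \<longrightarrow> (\<forall>n::nat. snd x = Some n \<longrightarrow> n \<noteq> 0 \<and> snd y = Some (n - 1)))" for i x y
  have "\<exists>x. Inv 0 x"
  proof (cases "\<rho> 0 \<in> accepting A")
    case True
    then show ?thesis using dup_wins_de_within_accepting[OF wf dup_wins_de_within_refl]
      unfolding Inv_def by fastforce
  next
    case False
    then show ?thesis using dup_wins_de_within_refl unfolding Inv_def by fastforce
  qed
  moreover have "\<exists>y. Inv (Suc i) y \<and> Step i x y" if "Inv i x" for i x
    using fx_de_saturated_step[OF wf suffix_omega_words[OF w]] sat[of i] that
    unfolding Inv_def Step_def by fastforce
  ultimately obtain f where inv: "\<And>i. Inv i (f i)" and step: "\<And>i. Step i (f i) (f (Suc i))"
    using dependent_nat_choice[of Inv Step] by blast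
  have "is_trace A w (\<lambda>i. fst (f i))" using step unfolding is_trace_def Step_def by blast
  moreover have "fst (f 0) \<in> initial A" using inv[of 0] \<open>\<rho> 0 \<in> initial A\<close> unfolding Inv_def by simp
  moreover have "\<exists>\<^sub>\<infinity> i. fst (f i) \<in> accepting A"
  proof (rule INFM_by_countdown[where c = "\<lambda>i. snd (f i)"])
    show "\<exists>\<^sub>\<infinity> i. snd (f i) \<noteq> None"
      using fair inv unfolding Inv_def by (auto elim: INFM_mono)
  qed (use step in \<open>auto simp: Step_def\<close>)
  ultimately show "w \<in> language A" unfolding language_def using w by blast
qed

lemma language_subset_Sat:
  assumes wf: "wf_complete_nba A" and refl: "\<And>t. t \<in> trans A \<Longrightarrow> (t, t) \<in> S"
  shows "language A \<subseteq> language (Sat A S)"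
proof -
  have "trans A \<subseteq> trans (Sat A S)" using wf refl unfolding wf_complete_nba_def Sat_def by auto
  then have "is_trace (Sat A S) w \<rho>" if "is_trace A w \<rho>" for w \<rho>
    using that unfolding is_trace_def by blast
  then show ?thesis unfolding language_def omega_words_def by (auto simp: Sat_def)
qed

theorem theorem10p3:
  fixes A :: "('s, 'q) nba"
  assumes "wf_complete_nba A"
  shows "good_for_saturation A (S_rel ((fx_de_sim A)\<inverse>) (fx_de_sim A))"
proof -
  have "(t, t) \<in> S_rel ((fx_de_sim A)\<inverse>) (fx_de_sim A)" if "t \<in> trans A" for t
  proof -
    obtain p a r where "t = (p, a, r)" "p \<in> states A" "r \<in> states A"
      using \<open>t \<in> trans A\<close> assms unfolding wf_complete_nba_def by blast
    then show ?thesis by (simp add: S_rel_def fx_de_sim_refl)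
  qed
  then show ?thesis unfolding good_for_saturation_def
    by (intro equalityI language_Sat_fx_de_subset[OF assms] language_subset_Sat[OF assms])
qed

end
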